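(* Let $\phi,\varphi\in\mathrm{Stab}_N(\mathbf{Q}_2)$, $x\in\mathbf{Q}_2$ and $v,w\in V$. Then: (1) if $vx=wx$, then $\log_2((\varphi^{-1}v\varphi)'(\varphi^{-1}x))-\log_2(v'(x))=\log_2((\varphi^{-1}w\varphi)'(\varphi^{-1}x))-\log_2(w'(x))$; (2) for $y\in\mathbf{Q}_2$ and $u\in V$ with $u0=y$, the quantity $\gamma_\varphi(y):=\log_2((\varphi^{-1}u\varphi)'(\varphi^{-1}0))-\log_2(u'(0))$ does not depend on the choice of $u$, hence defines a map $\gamma_\varphi:\mathbf{Q}_2\to\mathbf Z$; (3) $\gamma_\varphi(vx)-\gamma_\varphi(x)=\log_2((\varphi^{-1}v\varphi)'(\varphi^{-1}x))-\log_2(v'(x))$; (4) $\gamma_{\phi\varphi}=\gamma_\phi+\gamma_\varphi^\phi-\gamma_\varphi(\phi^{-1}(0))$, where $\gamma_\varphi^\phi(y)=\gamma_\varphi(\phi^{-1}y)$.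
   Context: Cantor space $\mathfrak C=\{0,1\}^{\mathbf N}$; $C_m=\{m\cdot x\}$. Thompson's group $V$: homeomorphisms $v$ with $v(m_kx)=m'_kx$ for partitions $\mathfrak C=\bigsqcup C_{m_k}=\bigsqcup C_{m'_k}$; slope $v'(x)=2^{|m_k|-|m'_k|}$ on $C_{m_k}$. $\mathbf{Q}_2\subset\mathfrak C$: eventually-zero sequences; $0$ denotes the zero sequence; $V$ acts transitively on $\mathbf{Q}_2$. $\mathrm{Stab}_N(\mathbf{Q}_2)=\{\varphi\in\mathrm{Homeo}(\mathfrak C):\varphi V\varphi^{-1}=V,\ \varphi(\mathbf{Q}_2)=\mathbf{Q}_2\}$. *)

theory Defs
  imports "HOL-Analysis.Analysis"
begin

type_synonym cantor = "nat \<Rightarrow> bool"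

definition cantor_top :: "cantor topology" where
  "cantor_top = product_topology (\<lambda>_. discrete_topology (UNIV :: bool set)) UNIV"

definition conc :: "bool list \<Rightarrow> cantor \<Rightarrow> cantor" where
  "conc m x = (\<lambda>n. if n < length m then m ! n else x (n - length m))"

definition cyl :: "bool list \<Rightarrow> cantor set" where
  "cyl m = range (conc m)"

definition is_partition :: "bool list list \<Rightarrow> bool" where
  "is_partition ms \<longleftrightarrow> (\<forall>x. \<exists>!k. k < length ms \<and> x \<in> cyl (ms ! k))"

definition V_data :: "(cantor \<Rightarrow> cantor) \<Rightarrow> bool list list \<Rightarrow> bool list list \<Rightarrow> bool" where
  "V_data v ms ms' \<longleftrightarrow> length ms = length ms' \<and> is_partition ms \<and> is_partition ms' \<and>
     (\<forall>k < length ms. \<forall>x. v (conc (ms ! k) x) = conc (ms' ! k) x)"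

definition thompsonV :: "(cantor \<Rightarrow> cantor) set" where
  "thompsonV = {v. \<exists>ms ms'. V_data v ms ms'}"

definition slope :: "(cantor \<Rightarrow> cantor) \<Rightarrow> cantor \<Rightarrow> real" where
  "slope v x = (THE s. \<exists>ms ms' k. V_data v ms ms' \<and> k < length ms \<and> x \<in> cyl (ms ! k) \<and>
      s = 2 powr (real (length (ms ! k)) - real (length (ms' ! k))))"

definition Q2 :: "cantor set" where
  "Q2 = {x. \<exists>N. \<forall>n\<ge>N. x n = False}"

definition zero_seq :: cantor where
  "zero_seq = (\<lambda>_. False)"

definition StabN :: "(cantor \<Rightarrow> cantor) set" where
  "StabN = {\<phi>. homeomorphic_map cantor_top cantor_top \<phi> \<and>
                (\<lambda>v. \<phi> \<circ> v \<circ> inv \<phi>) ` thompsonV = thompsonV \<and> \<phi> ` Q2 = Q2}"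

definition gamma :: "(cantor \<Rightarrow> cantor) \<Rightarrow> cantor \<Rightarrow> real" where
  "gamma \<phi> y = (let u = (SOME u. u \<in> thompsonV \<and> u zero_seq = y) in
     log 2 (slope (inv \<phi> \<circ> u \<circ> \<phi>) (inv \<phi> zero_seq)) - log 2 (slope u zero_seq))"

end

theory Submission
  imports Defs
begin

text \<open>
  Write c(v, x) = log2 (\<phi>^-1 v \<phi>)'(\<phi>^-1 x) - log2 v'(x).  By the chain rule for slopes it is a
  cocycle, c(g h, x) = c(g, h x) + c(h, x), so everything reduces to c(g, x) = 0 for g fixing
  x \<in> Q2: then (1) follows from v = w (w^-1 v), and (2)-(4) are formal consequences together
  with the transitivity of V on Q2.

  Near a fixed point an element of V is determined by its slope, and the homeomorphism \<phi>
  carries equal germs to equal germs.  Hence on the stabiliser of x the log-slope of the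
  conjugate is \<lambda> times that of g, where \<lambda> is a unit of the integers since \<phi>^-1 induces the
  inverse map.  The case \<lambda> = -1 is ruled out dynamically: it would turn the repelling fixed
  point of an element of slope 2 into an attracting one.
\<close>

section \<open>Cylinders\<close>

definition take_seq :: "nat \<Rightarrow> cantor \<Rightarrow> bool list" where
  "take_seq L x = map x [0..<L]"

definition drop_seq :: "nat \<Rightarrow> cantor \<Rightarrow> cantor" where
  "drop_seq L x = (\<lambda>n. x (n + L))"

lemma length_take_seq [simp]: "length (take_seq L x) = L"
  by (simp add: take_seq_def)

lemma nth_take_seq [simp]: "i < L \<Longrightarrow> take_seq L x ! i = x i"
  by (simp add: take_seq_def)

lemma conc_take_drop_seq [simp]: "conc (take_seq L x) (drop_seq L x) = x"
  by (auto simp: conc_def take_seq_def drop_seq_def)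

lemma conc_Nil [simp]: "conc [] y = y"
  by (simp add: conc_def)

lemma conc_append: "conc (p @ q) y = conc p (conc q y)"
  by (auto simp: conc_def nth_append)

lemma conc_in_cyl [simp]: "conc p y \<in> cyl p"
  by (simp add: cyl_def)

lemma conc_inject: "conc p y = conc p y' \<Longrightarrow> y = y'"
proof
  fix n
  assume "conc p y = conc p y'"
  then have "conc p y (n + length p) = conc p y' (n + length p)"
    by simp
  then show "y n = y' n"
    by (simp add: conc_def)
qed

lemma mem_cyl_iff: "y \<in> cyl p \<longleftrightarrow> (\<forall>i<length p. y i = p ! i)"
proof
  assume "\<forall>i<length p. y i = p ! i"
  then have "y = conc p (drop_seq (length p) y)"
    by (auto simp: conc_def drop_seq_def)
  then show "y \<in> cyl p"
    by (metis conc_in_cyl)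
qed (auto simp: cyl_def conc_def)

lemma mem_cyl_iff_take_seq: "y \<in> cyl p \<longleftrightarrow> take_seq (length p) y = p"
  by (auto simp: mem_cyl_iff list_eq_iff_nth_eq)

lemma mem_cyl_take_seq [simp]: "x \<in> cyl (take_seq L x)"
  by (simp add: mem_cyl_iff)

lemma drop_seq_conc [simp]: "drop_seq (length p) (conc p y) = y"
  by (simp add: drop_seq_def conc_def)

lemma conc_drop_seq_cyl: "y \<in> cyl p \<Longrightarrow> conc p (drop_seq (length p) y) = y"
  by (metis conc_take_drop_seq mem_cyl_iff_take_seq)

lemma cyl_take_seq_antimono: "L \<le> M \<Longrightarrow> cyl (take_seq M x) \<subseteq> cyl (take_seq L x)"
  by (auto simp: mem_cyl_iff)

lemma take_seq_add: "take_seq (L + M) x = take_seq L x @ take_seq M (drop_seq L x)"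
  by (auto simp: take_seq_def drop_seq_def list_eq_iff_nth_eq nth_append)

lemma conc_eq_conc_imp_eq:
  assumes "\<And>y. conc p y = conc q y"
  shows "p = q"
proof -
  have "length p = length q"
  proof (rule ccontr)
    assume "length p \<noteq> length q"
    then show False
      using assms[of "\<lambda>_. True"] assms[of "\<lambda>_. False"]
      by (metis conc_def less_irrefl linorder_neqE_nat)
  qed
  moreover have "p ! i = q ! i" if "i < length p" for i
    using assms[of "\<lambda>_. True"] that \<open>length p = length q\<close>
    by (metis conc_def)
  ultimately show ?thesis
    by (simp add: list_eq_iff_nth_eq)
qed

lemma cyl_nested_prefix:
  assumes "x \<in> cyl p" "x \<in> cyl q" "length p \<le> length q"
  shows "q = p @ drop (length p) q"
proof -
  have "take (length p) q = p"
    using assms by (auto simp: mem_cyl_iff list_eq_iff_nth_eq)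
  then show ?thesis
    by (metis append_take_drop_id)
qed

section \<open>Prefix replacements and Thompson's group V\<close>

definition prefix_replacement :: "(cantor \<Rightarrow> cantor) \<Rightarrow> bool list \<Rightarrow> bool list \<Rightarrow> bool" where
  "prefix_replacement v p p' \<longleftrightarrow> (\<forall>y. v (conc p y) = conc p' y)"

lemma prefix_replacement_append: "prefix_replacement v p p' \<Longrightarrow> prefix_replacement v (p @ r) (p' @ r)"
  by (simp add: prefix_replacement_def conc_append)

lemma prefix_replacement_image: "prefix_replacement v p p' \<Longrightarrow> x \<in> cyl p \<Longrightarrow> v x \<in> cyl p'"
  unfolding prefix_replacement_def cyl_def by auto

lemma prefix_replacement_take_seq_image:
  "prefix_replacement v (take_seq L x) p' \<Longrightarrow> p' = take_seq (length p') (v x)"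
  by (metis mem_cyl_iff_take_seq mem_cyl_take_seq prefix_replacement_image)

lemma prefix_replacement_length_diff_eq:
  assumes "prefix_replacement v p p'" "prefix_replacement v q q'" "x \<in> cyl p" "x \<in> cyl q"
  shows "int (length p) - int (length p') = int (length q) - int (length q')"
proof -
  have *: "int (length p) - int (length p') = int (length q) - int (length q')"
    if "prefix_replacement v p p'" "prefix_replacement v q q'" "x \<in> cyl p" "x \<in> cyl q" "length p \<le> length q"
    for p p' q q'
  proof -
    define r where "r = drop (length p) q"
    have q: "q = p @ r"
      unfolding r_def using cyl_nested_prefix that(3-5) .
    have "conc q' y = conc (p' @ r) y" for y
      using that(1,2) prefix_replacement_append[of v p p' r] by (simp add: prefix_replacement_def q)
    then have "q' = p' @ r"
      by (rule conc_eq_conc_imp_eq)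
    then show ?thesis
      using q by simp
  qed
  show ?thesis
    using *[OF assms] *[OF assms(2,1,4,3)] by linarith
qed

definition replacement_depth :: "(cantor \<Rightarrow> cantor) \<Rightarrow> nat \<Rightarrow> bool" where
  "replacement_depth v N \<longleftrightarrow> (\<forall>p. length p = N \<longrightarrow> (\<exists>p'. prefix_replacement v p p'))"

lemma replacement_depth_mono:
  assumes "replacement_depth v N" "N \<le> M"
  shows "replacement_depth v M"
  unfolding replacement_depth_def
proof (intro allI impI)
  fix p :: "bool list"
  assume "length p = M"
  then have "length (take N p) = N"
    using assms(2) by simp
  then obtain p' where "prefix_replacement v (take N p) p'"
    using assms(1) unfolding replacement_depth_def by blast
  then show "\<exists>p'. prefix_replacement v p p'"
    by (metis append_take_drop_id prefix_replacement_append)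
qed

lemma replacement_depth_comp:
  assumes "replacement_depth v N" "replacement_depth w M"
  shows "replacement_depth (w \<circ> v) (N + M)"
  unfolding replacement_depth_def
proof (intro allI impI)
  fix p :: "bool list"
  assume p: "length p = N + M"
  have "length (take N p) = N"
    using p by simp
  then obtain a' where a': "prefix_replacement v (take N p) a'"
    using assms(1) unfolding replacement_depth_def by blast
  define q where "q = a' @ drop N p"
  have "length (take M q) = M"
    using p by (simp add: q_def)
  then obtain c' where c': "prefix_replacement w (take M q) c'"
    using assms(2) unfolding replacement_depth_def by blast
  have "prefix_replacement v p q"
    using prefix_replacement_append[OF a', of "drop N p"] by (simp add: q_def)
  moreover have "prefix_replacement w q (c' @ drop M q)"
    using prefix_replacement_append[OF c', of "drop M q"] by simp
  ultimately have "prefix_replacement (w \<circ> v) p (c' @ drop M q)"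
    by (simp add: prefix_replacement_def)
  then show "\<exists>p'. prefix_replacement (w \<circ> v) p p'"
    by blast
qed

lemma is_partition_cover: "is_partition ms \<Longrightarrow> \<exists>k<length ms. x \<in> cyl (ms ! k)"
  unfolding is_partition_def by blast

lemma V_data_cover: "V_data v ms ms' \<Longrightarrow> \<exists>k<length ms. x \<in> cyl (ms ! k)"
  unfolding V_data_def is_partition_def by blast

lemma V_data_prefix_replacement: "V_data v ms ms' \<Longrightarrow> k < length ms \<Longrightarrow> prefix_replacement v (ms ! k) (ms' ! k)"
  by (simp add: V_data_def prefix_replacement_def)

lemma thompsonV_replacement_depth:
  assumes "v \<in> thompsonV"
  obtains N where "replacement_depth v N"
proof -
  obtain ms ms' where d: "V_data v ms ms'"
    using assms by (auto simp: thompsonV_def)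
  define N where "N = Max (length ` set ms)"
  have "replacement_depth v N"
    unfolding replacement_depth_def
  proof (intro allI impI)
    fix p :: "bool list"
    assume p: "length p = N"
    obtain k where k: "k < length ms" "conc p zero_seq \<in> cyl (ms ! k)"
      using V_data_cover[OF d] by blast
    have "length (ms ! k) \<le> length p"
      using k(1) p by (auto simp: N_def)
    then have "p = ms ! k @ drop (length (ms ! k)) p"
      using cyl_nested_prefix[OF k(2)] by simp
    then show "\<exists>p'. prefix_replacement v p p'"
      using prefix_replacement_append[OF V_data_prefix_replacement[OF d k(1)]] by metis
  qed
  then show thesis
    by (rule that)
qed

lemma thompsonV_eventually_replacement:
  assumes "v \<in> thompsonV"
  obtains N where "\<And>L. N \<le> L \<Longrightarrow> \<exists>p'. prefix_replacement v (take_seq L x) p'"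
  using thompsonV_replacement_depth[OF assms] replacement_depth_mono
  by (metis length_take_seq replacement_depth_def)

lemma thompsonV_bij:
  assumes "v \<in> thompsonV"
  shows "bij v"
proof -
  obtain ms ms' where d: "V_data v ms ms'"
    using assms by (auto simp: thompsonV_def)
  then have part: "is_partition ms" "is_partition ms'" "length ms = length ms'"
    by (auto simp: V_data_def)
  have "y \<in> range v" for y
  proof -
    obtain k t where k: "k < length ms'" "y = conc (ms' ! k) t"
      using is_partition_cover[OF part(2), of y] by (auto simp: cyl_def)
    then have "y = v (conc (ms ! k) t)"
      using d part(3) by (simp add: V_data_def)
    then show ?thesis
      by blast
  qed
  then have "surj v"
    by blast
  moreover have "inj v"
  proof
    fix a b
    assume eq: "v a = v b"
    obtain i s where i: "i < length ms" "a = conc (ms ! i) s"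
      using is_partition_cover[OF part(1), of a] by (auto simp: cyl_def)
    obtain j t where j: "j < length ms" "b = conc (ms ! j) t"
      using is_partition_cover[OF part(1), of b] by (auto simp: cyl_def)
    have "v a = conc (ms' ! i) s" "v b = conc (ms' ! j) t"
      using d i j by (auto simp: V_data_def)
    then have "i = j"
      using part i(1) j(1) eq conc_in_cyl unfolding is_partition_def by metis
    then show "a = b"
      using \<open>v a = conc (ms' ! i) s\<close> \<open>v b = conc (ms' ! j) t\<close> eq i j conc_inject by metis
  qed
  ultimately show ?thesis
    by (simp add: bij_def)
qed

lemma thompsonV_inv:
  assumes "v \<in> thompsonV"
  shows "inv v \<in> thompsonV"
proof -
  obtain ms ms' where "V_data v ms ms'"
    using assms by (auto simp: thompsonV_def)
  then have "V_data (inv v) ms' ms"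
    unfolding V_data_def by (metis thompsonV_bij[OF assms] bij_inv_eq_iff)
  then show ?thesis
    by (auto simp: thompsonV_def)
qed

lemma is_partition_words: "is_partition (List.n_lists N [False, True])" (is "is_partition ?ws")
  unfolding is_partition_def
proof
  fix x
  have "take_seq N x \<in> set ?ws"
    by (auto simp: set_n_lists)
  then obtain k where k: "k < length ?ws" "?ws ! k = take_seq N x"
    by (auto simp: in_set_conv_nth)
  have "j = k" if "j < length ?ws" "x \<in> cyl (?ws ! j)" for j
    using that k nth_mem[OF that(1)] nth_eq_iff_index_eq[OF distinct_n_lists[of "[False, True]"]]
    by (auto simp: set_n_lists mem_cyl_iff_take_seq)
  then show "\<exists>!k. k < length ?ws \<and> x \<in> cyl (?ws ! k)"
    using k by (metis mem_cyl_take_seq)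
qed

lemma is_partition_image:
  assumes "bij v" "is_partition ms" "length ms' = length ms"
    and rep: "\<And>k. k < length ms \<Longrightarrow> prefix_replacement v (ms ! k) (ms' ! k)"
  shows "is_partition ms'"
  unfolding is_partition_def
proof
  fix x
  obtain a where a: "x = v a"
    using assms(1) by (metis bij_pointE)
  obtain k where k: "k < length ms" "a \<in> cyl (ms ! k)"
    using is_partition_cover[OF assms(2)] by blast
  have "x \<in> cyl (ms' ! k)"
    using a prefix_replacement_image[OF rep[OF k(1)] k(2)] by simp
  moreover have "j = k" if j: "j < length ms'" "x \<in> cyl (ms' ! j)" for j
  proof -
    obtain t where "x = conc (ms' ! j) t"
      using j(2) by (auto simp: cyl_def)
    then have "v (conc (ms ! j) t) = v a"
      using a rep j(1) assms(3) by (simp add: prefix_replacement_def)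
    then have "a \<in> cyl (ms ! j)"
      using bij_is_inj[OF assms(1)] by (metis conc_in_cyl injD)
    then show "j = k"
      using assms(2,3) j(1) k unfolding is_partition_def by metis
  qed
  ultimately show "\<exists>!k. k < length ms' \<and> x \<in> cyl (ms' ! k)"
    using k(1) assms(3) by metis
qed

lemma replacement_depth_imp_thompsonV:
  assumes "bij v" "replacement_depth v N"
  shows "v \<in> thompsonV"
proof -
  define ms where "ms = List.n_lists N [False, True]"
  define ms' where "ms' = map (\<lambda>p. SOME p'. prefix_replacement v p p') ms"
  have rep: "prefix_replacement v (ms ! k) (ms' ! k)" if "k < length ms" for k
  proof -
    have "length (ms ! k) = N"
      using that nth_mem by (fastforce simp: ms_def set_n_lists)
    then have "\<exists>p'. prefix_replacement v (ms ! k) p'"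
      using assms(2) by (simp add: replacement_depth_def)
    then show ?thesis
      using that unfolding ms'_def by (simp add: someI_ex)
  qed
  have "is_partition ms"
    unfolding ms_def by (rule is_partition_words)
  moreover have "length ms' = length ms"
    by (simp add: ms'_def)
  ultimately have "V_data v ms ms'"
    using is_partition_image[OF assms(1)] rep by (auto simp: V_data_def prefix_replacement_def)
  then show ?thesis
    by (auto simp: thompsonV_def)
qed

lemma thompsonV_comp: "v \<in> thompsonV \<Longrightarrow> w \<in> thompsonV \<Longrightarrow> w \<circ> v \<in> thompsonV"
  by (meson thompsonV_bij thompsonV_replacement_depth bij_comp replacement_depth_comp
      replacement_depth_imp_thompsonV)

lemma thompsonV_id: "id \<in> thompsonV"
  by (rule replacement_depth_imp_thompsonV[of id 0])
    (auto simp: replacement_depth_def prefix_replacement_def intro: exI[of _ "[]"])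

section \<open>Slopes\<close>

abbreviation log_slope :: "(cantor \<Rightarrow> cantor) \<Rightarrow> cantor \<Rightarrow> real" where
  "log_slope v x \<equiv> log 2 (slope v x)"

lemma slope_prefix_replacement:
  assumes "v \<in> thompsonV" "x \<in> cyl p" "prefix_replacement v p p'"
  shows "slope v x = 2 powr (real (length p) - real (length p'))"
proof -
  have same: "real (length (ms ! k)) - real (length (ms' ! k)) = real (length p) - real (length p')"
    if "V_data v ms ms'" "k < length ms" "x \<in> cyl (ms ! k)" for ms ms' k
    using prefix_replacement_length_diff_eq[OF V_data_prefix_replacement[OF that(1,2)]
        assms(3) that(3) assms(2)]
    by linarith
  obtain ms ms' where d: "V_data v ms ms'"
    using assms(1) by (auto simp: thompsonV_def)
  obtain k where k: "k < length ms" "x \<in> cyl (ms ! k)"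
    using V_data_cover[OF d] by blast
  show ?thesis
    unfolding slope_def using d k same by (intro the_equality) metis+
qed

lemma log_slope_prefix_replacement:
  "v \<in> thompsonV \<Longrightarrow> x \<in> cyl p \<Longrightarrow> prefix_replacement v p p' \<Longrightarrow>
    log_slope v x = real (length p) - real (length p')"
  by (simp add: slope_prefix_replacement)

lemma log_slope_Ints:
  assumes "v \<in> thompsonV"
  shows "log_slope v x \<in> \<int>"
proof -
  obtain N p' where "prefix_replacement v (take_seq N x) p'"
    using thompsonV_eventually_replacement[OF assms] by blast
  then show ?thesis
    using log_slope_prefix_replacement[OF assms mem_cyl_take_seq] by (metis Ints_diff Ints_of_nat)
qed

lemma log_slope_id: "log_slope id x = 0"
  using log_slope_prefix_replacement[OF thompsonV_id, of x "[]" "[]"]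
  by (simp add: prefix_replacement_def mem_cyl_iff)

lemma log_slope_comp:
  assumes "g \<in> thompsonV" "h \<in> thompsonV"
  shows "log_slope (g \<circ> h) x = log_slope g (h x) + log_slope h x"
proof -
  obtain L0 where L0: "\<And>L. L0 \<le> L \<Longrightarrow> \<exists>p'. prefix_replacement h (take_seq L x) p'"
    using thompsonV_eventually_replacement[OF assms(2)] by blast
  obtain M0 where M0: "\<And>M. M0 \<le> M \<Longrightarrow> \<exists>q'. prefix_replacement g (take_seq M (h x)) q'"
    using thompsonV_eventually_replacement[OF assms(1)] by blast
  obtain p0 where p0: "prefix_replacement h (take_seq L0 x) p0"
    using L0 by blast
  define p' where "p' = p0 @ take_seq M0 (drop_seq L0 x)"
  have p': "prefix_replacement h (take_seq (L0 + M0) x) p'"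
    using prefix_replacement_append[OF p0] by (simp add: take_seq_add p'_def)
  have "M0 \<le> length p'"
    by (simp add: p'_def)
  then obtain q' where q': "prefix_replacement g p' q'"
    using M0 prefix_replacement_take_seq_image[OF p'] by metis
  have "prefix_replacement (g \<circ> h) (take_seq (L0 + M0) x) q'"
    using p' q' by (simp add: prefix_replacement_def)
  then show ?thesis
    using log_slope_prefix_replacement[OF thompsonV_comp[OF assms(2,1)] mem_cyl_take_seq]
      log_slope_prefix_replacement[OF assms(2) mem_cyl_take_seq p']
      log_slope_prefix_replacement[OF assms(1) _ q']
      prefix_replacement_image[OF p' mem_cyl_take_seq]
    by simp
qed

lemma log_slope_inv:
  assumes "g \<in> thompsonV"
  shows "log_slope (inv g) (g x) = - log_slope g x"
proof -
  have "inv g \<circ> g = id"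
    using thompsonV_bij[OF assms] by (simp add: bij_is_inj)
  then show ?thesis
    using log_slope_comp[OF thompsonV_inv[OF assms] assms, of x] log_slope_id by simp
qed

lemma thompsonV_inv_fixed:
  assumes "g \<in> thompsonV" "g x = x"
  shows "inv g \<in> thompsonV" "inv g x = x" "log_slope (inv g) x = - log_slope g x"
  using thompsonV_inv[OF assms(1)] log_slope_inv[OF assms(1), of x] thompsonV_bij[OF assms(1)] assms(2)
  by (auto simp: bij_is_inj inv_f_eq)

section \<open>The orbit Q2\<close>

lemma Q2_iff_conc_zero: "x \<in> Q2 \<longleftrightarrow> (\<exists>p. x = conc p zero_seq)"
proof
  assume "x \<in> Q2"
  then obtain N where "\<forall>n\<ge>N. \<not> x n"
    by (auto simp: Q2_def)
  then have "x = conc (take_seq N x) zero_seq"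
    by (auto simp: conc_def zero_seq_def fun_eq_iff)
  then show "\<exists>p. x = conc p zero_seq" ..
next
  assume "\<exists>p. x = conc p zero_seq"
  then obtain p where "x = conc p zero_seq" ..
  then have "\<forall>n\<ge>length p. \<not> x n"
    by (simp add: conc_def zero_seq_def)
  then show "x \<in> Q2"
    by (auto simp: Q2_def)
qed

lemma zero_seq_in_Q2 [simp]: "zero_seq \<in> Q2"
  by (simp add: Q2_def zero_seq_def)

lemma conc_replicate_zero_seq: "conc (replicate n False) zero_seq = zero_seq"
  by (auto simp: conc_def zero_seq_def)

lemma thompsonV_Q2:
  assumes "v \<in> thompsonV" "x \<in> Q2"
  shows "v x \<in> Q2"
proof -
  obtain N p' where p': "prefix_replacement v (take_seq N x) p'"
    using thompsonV_eventually_replacement[OF assms(1)] by blast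
  obtain M where "\<forall>n\<ge>M. \<not> x n"
    using assms(2) by (auto simp: Q2_def)
  then have "\<forall>n\<ge>M. \<not> drop_seq N x n"
    by (simp add: drop_seq_def)
  then have "drop_seq N x \<in> Q2"
    by (auto simp: Q2_def)
  then obtain q where "drop_seq N x = conc q zero_seq"
    using Q2_iff_conc_zero by blast
  then have "v x = conc (p' @ q) zero_seq"
    using p' conc_take_drop_seq[of N x] by (metis conc_append prefix_replacement_def)
  then show ?thesis
    using Q2_iff_conc_zero by blast
qed

definition cyl_patch :: "bool list \<Rightarrow> (cantor \<Rightarrow> cantor) \<Rightarrow> cantor \<Rightarrow> cantor" where
  "cyl_patch p g y = (if y \<in> cyl p then conc p (g (drop_seq (length p) y)) else y)"

lemma cyl_patch_conc [simp]: "cyl_patch p g (conc p y) = conc p (g y)"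
  by (simp add: cyl_patch_def)

lemma cyl_patch_comp: "cyl_patch p g \<circ> cyl_patch p h = cyl_patch p (g \<circ> h)"
  by (auto simp: cyl_patch_def cyl_def)

lemma cyl_patch_id: "cyl_patch p id = id"
  by (auto simp: cyl_patch_def conc_drop_seq_cyl)

lemma bij_cyl_patch:
  assumes "bij g"
  shows "bij (cyl_patch p g)"
proof -
  have "cyl_patch p g \<circ> cyl_patch p (inv g) = id" "cyl_patch p (inv g) \<circ> cyl_patch p g = id"
    using assms by (simp_all add: cyl_patch_comp cyl_patch_id bij_is_surj bij_is_inj
        surj_iff[THEN iffD1] inj_iff[THEN iffD1])
  then show ?thesis
    using o_bij by blast
qed

lemma prefix_replacement_cyl_patch:
  "prefix_replacement g a b \<Longrightarrow> prefix_replacement (cyl_patch p g) (p @ a) (p @ b)"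
  by (simp add: prefix_replacement_def conc_append)

lemma replacement_depth_cyl_patch:
  assumes "replacement_depth g N"
  shows "replacement_depth (cyl_patch p g) (length p + N)"
  unfolding replacement_depth_def
proof (intro allI impI)
  fix u :: "bool list"
  assume u: "length u = length p + N"
  show "\<exists>u'. prefix_replacement (cyl_patch p g) u u'"
  proof (cases "take (length p) u = p")
    case True
    then have "u = p @ drop (length p) u"
      by (metis append_take_drop_id)
    moreover have "length (drop (length p) u) = N"
      using u by simp
    then obtain b' where "prefix_replacement g (drop (length p) u) b'"
      using assms unfolding replacement_depth_def by blast
    ultimately show ?thesis
      using prefix_replacement_cyl_patch by metis
  next
    case False
    then have "conc u y \<notin> cyl p" for y
      using u by (auto simp: mem_cyl_iff conc_def list_eq_iff_nth_eq)
    then have "prefix_replacement (cyl_patch p g) u u"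
      by (simp add: prefix_replacement_def cyl_patch_def)
    then show ?thesis ..
  qed
qed

lemma thompsonV_cyl_patch: "g \<in> thompsonV \<Longrightarrow> cyl_patch p g \<in> thompsonV"
  by (meson thompsonV_bij thompsonV_replacement_depth bij_cyl_patch replacement_depth_cyl_patch
      replacement_depth_imp_thompsonV)

definition flip_head :: "cantor \<Rightarrow> cantor" where
  "flip_head y = y(0 := \<not> y 0)"

lemma thompsonV_flip_head: "flip_head \<in> thompsonV"
proof (rule replacement_depth_imp_thompsonV)
  have "flip_head \<circ> flip_head = id"
    by (auto simp: flip_head_def)
  then show "bij flip_head"
    using o_bij by blast
  have "prefix_replacement flip_head [b] [\<not> b]" for b
    by (auto simp: prefix_replacement_def flip_head_def conc_def)
  then show "replacement_depth flip_head 1"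
    by (auto simp: replacement_depth_def length_Suc_conv)
qed

lemma flip_head_zero_seq: "flip_head zero_seq = conc [True] zero_seq"
  by (auto simp: flip_head_def conc_def zero_seq_def fun_eq_iff)

lemma thompsonV_transitive_Q2:
  assumes "y \<in> Q2"
  obtains u where "u \<in> thompsonV" "u zero_seq = y"
proof -
  have "\<exists>u\<in>thompsonV. u zero_seq = conc p zero_seq" for p
  proof (induction p rule: rev_induct)
    case Nil
    show ?case
      using thompsonV_id by (metis conc_Nil id_apply)
  next
    case (snoc b p)
    then obtain u where u: "u \<in> thompsonV" "u zero_seq = conc p zero_seq"
      by blast
    show ?case
    proof (cases b)
      case True
      then have "(cyl_patch p flip_head \<circ> u) zero_seq = conc (p @ [b]) zero_seq"
        using u by (simp add: flip_head_zero_seq conc_append)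
      then show ?thesis
        using thompsonV_comp[OF u(1) thompsonV_cyl_patch[OF thompsonV_flip_head]] by blast
    next
      case False
      then have "conc (p @ [b]) zero_seq = conc p zero_seq"
        using conc_replicate_zero_seq[of 1] by (simp add: conc_append)
      then show ?thesis
        using u by metis
    qed
  qed
  then show thesis
    using assms that Q2_iff_conc_zero by metis
qed

text \<open>The standard generator x_0 of Thompson's group F, used for its fixed point zero_seq
  of slope 2.\<close>

definition thompson_x0 :: "cantor \<Rightarrow> cantor" where
  "thompson_x0 y =
    (if y 0 then conc [True, True] (drop_seq 1 y)
     else if y 1 then conc [True, False] (drop_seq 2 y)
     else conc [False] (drop_seq 2 y))"

definition thompson_x0_inv :: "cantor \<Rightarrow> cantor" where
  "thompson_x0_inv y =
    (if \<not> y 0 then conc [False, False] (drop_seq 1 y)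
     else if \<not> y 1 then conc [False, True] (drop_seq 2 y)
     else conc [True] (drop_seq 2 y))"

lemma bij_thompson_x0: "bij thompson_x0"
proof -
  have cases: "n = 0 \<or> n = 1 \<or> (\<exists>m. n = m + 2)" for n :: nat
    by presburger
  have "(thompson_x0 \<circ> thompson_x0_inv) y n = y n" "(thompson_x0_inv \<circ> thompson_x0) y n = y n"
    for y n
    using cases[of n] by (auto simp: thompson_x0_def thompson_x0_inv_def conc_def drop_seq_def)
  then have "thompson_x0 \<circ> thompson_x0_inv = id" "thompson_x0_inv \<circ> thompson_x0 = id"
    by (simp_all add: fun_eq_iff)
  then show ?thesis
    using o_bij by blast
qed

lemma prefix_replacement_thompson_x0:
  "prefix_replacement thompson_x0 [False, False] [False]"
  "prefix_replacement thompson_x0 [False, True] [True, False]"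
  "prefix_replacement thompson_x0 [True, b] [True, True, b]"
  by (auto simp: prefix_replacement_def thompson_x0_def conc_def drop_seq_def fun_eq_iff
      nth_Cons' numeral_2_eq_2)

lemma thompsonV_thompson_x0: "thompson_x0 \<in> thompsonV"
proof (rule replacement_depth_imp_thompsonV[OF bij_thompson_x0])
  show "replacement_depth thompson_x0 2"
    unfolding replacement_depth_def
  proof (intro allI impI)
    fix p :: "bool list"
    assume "length p = 2"
    then obtain a b where "p = [a, b]"
      by (auto simp: numeral_2_eq_2 length_Suc_conv)
    then show "\<exists>p'. prefix_replacement thompson_x0 p p'"
      using prefix_replacement_thompson_x0 by (cases a; cases b) auto
  qed
qed

lemma zero_seq_eq_conc: "zero_seq = conc [False, False] zero_seq"
  using conc_replicate_zero_seq[of 2] by (simp add: numeral_2_eq_2)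

lemma thompson_x0_zero_seq: "thompson_x0 zero_seq = zero_seq"
  by (auto simp: thompson_x0_def zero_seq_def conc_def drop_seq_def fun_eq_iff)

lemma thompsonV_fixing_with_log_slope_one:
  assumes "x \<in> Q2"
  obtains f where "f \<in> thompsonV" "f x = x" "log_slope f x = 1"
proof -
  obtain p where p: "x = conc p zero_seq"
    using assms Q2_iff_conc_zero by blast
  define f where "f = cyl_patch p thompson_x0"
  have fV: "f \<in> thompsonV"
    unfolding f_def by (rule thompsonV_cyl_patch[OF thompsonV_thompson_x0])
  moreover have "f x = x"
    by (simp add: f_def p thompson_x0_zero_seq)
  moreover have "log_slope f x = 1"
  proof -
    have "x \<in> cyl (p @ [False, False])"
      by (metis p conc_append zero_seq_eq_conc conc_in_cyl)
    moreover have "prefix_replacement f (p @ [False, False]) (p @ [False])"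
      unfolding f_def by (rule prefix_replacement_cyl_patch[OF prefix_replacement_thompson_x0(1)])
    ultimately show ?thesis
      using log_slope_prefix_replacement[OF fV] by simp
  qed
  ultimately show thesis
    by (rule that)
qed

section \<open>Germs and conjugation\<close>

lemma topspace_cantor_top [simp]: "topspace cantor_top = UNIV"
  by (simp add: cantor_top_def PiE_UNIV_domain)

lemma cyl_eq_PiE: "cyl p = (\<Pi>\<^sub>E i\<in>UNIV. if i < length p then {p ! i} else UNIV)"
  by (auto simp: mem_cyl_iff PiE_UNIV_domain Pi_iff) (metis singletonD)+

lemma openin_cyl: "openin cantor_top (cyl p)"
proof -
  have "finite {i. (if i < length p then {p ! i} else UNIV) \<noteq> (UNIV :: bool set)}"
    by (rule finite_subset[of _ "{..<length p}"]) auto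
  then show ?thesis
    unfolding cantor_top_def cyl_eq_PiE by (simp add: openin_PiE_gen)
qed

lemma openin_cantor_top_imp_cyl:
  assumes "openin cantor_top S" "x \<in> S"
  obtains L where "cyl (take_seq L x) \<subseteq> S"
proof -
  obtain U where U: "finite {i. U i \<noteq> (UNIV :: bool set)}" "x \<in> Pi\<^sub>E UNIV U" "Pi\<^sub>E UNIV U \<subseteq> S"
  proof -
    have "\<exists>U. finite {i \<in> UNIV. U i \<noteq> topspace (discrete_topology (UNIV :: bool set))} \<and>
        (\<forall>i\<in>UNIV. openin (discrete_topology UNIV) (U i)) \<and> x \<in> Pi\<^sub>E UNIV U \<and> Pi\<^sub>E UNIV U \<subseteq> S"
      using assms unfolding cantor_top_def openin_product_topology_alt by (rule bspec)
    then show thesis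
      using that by auto
  qed
  obtain L where L: "\<And>i. U i \<noteq> UNIV \<Longrightarrow> i < L"
    using finite_nat_bounded[OF U(1)] by auto
  have "cyl (take_seq L x) \<subseteq> Pi\<^sub>E UNIV U"
  proof
    fix y
    assume y: "y \<in> cyl (take_seq L x)"
    have "y i \<in> U i" for i
    proof (cases "U i = UNIV")
      case False
      then have "y i = x i"
        using y L[of i] by (simp add: mem_cyl_iff)
      then show ?thesis
        using U(2) by (simp add: PiE_UNIV_domain Pi_iff)
    qed simp
    then show "y \<in> Pi\<^sub>E UNIV U"
      by (simp add: PiE_UNIV_domain)
  qed
  then show thesis
    using U(3) that by (meson order_trans)
qed

abbreviation conjugate :: "(cantor \<Rightarrow> cantor) \<Rightarrow> (cantor \<Rightarrow> cantor) \<Rightarrow> cantor \<Rightarrow> cantor" where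
  "conjugate \<phi> g \<equiv> inv \<phi> \<circ> g \<circ> \<phi>"

lemma conjugate_comp: "bij \<phi> \<Longrightarrow> conjugate \<phi> (g \<circ> h) = conjugate \<phi> g \<circ> conjugate \<phi> h"
  by (simp add: fun_eq_iff bij_is_surj surj_f_inv_f)

lemma image_conjugate: "bij \<phi> \<Longrightarrow> f ` \<phi> ` S = \<phi> ` conjugate \<phi> f ` S"
  by (simp add: image_comp comp_def bij_is_surj surj_f_inv_f)

lemma conjugate_apply_inv: "bij \<phi> \<Longrightarrow> conjugate \<phi> g (inv \<phi> x) = inv \<phi> (g x)"
  by (simp add: bij_is_surj surj_f_inv_f)

lemma StabN_bij:
  assumes "\<phi> \<in> StabN"
  shows "bij \<phi>"
proof -
  have "homeomorphic_map cantor_top cantor_top \<phi>"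
    using assms by (simp add: StabN_def)
  then show ?thesis
    unfolding bij_def using homeomorphic_imp_injective_map homeomorphic_imp_surjective_map
    by fastforce
qed

lemma StabN_conjugate:
  assumes "\<phi> \<in> StabN" "g \<in> thompsonV"
  shows "conjugate \<phi> g \<in> thompsonV"
proof -
  obtain v where v: "v \<in> thompsonV" "g = \<phi> \<circ> v \<circ> inv \<phi>"
    using assms unfolding StabN_def by blast
  have "conjugate \<phi> g = (inv \<phi> \<circ> \<phi>) \<circ> v \<circ> (inv \<phi> \<circ> \<phi>)"
    by (simp add: v(2) o_assoc)
  also have "\<dots> = v"
    using StabN_bij[OF assms(1)] by (simp add: bij_is_inj)
  finally show ?thesis
    using v(1) by simp
qed

lemma StabN_conjugate_inv:
  "\<phi> \<in> StabN \<Longrightarrow> g \<in> thompsonV \<Longrightarrow> \<phi> \<circ> g \<circ> inv \<phi> \<in> thompsonV"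
  unfolding StabN_def by blast

lemma StabN_inv_Q2:
  assumes "\<phi> \<in> StabN" "x \<in> Q2"
  shows "inv \<phi> x \<in> Q2"
proof -
  obtain y where "y \<in> Q2" "x = \<phi> y"
    using assms unfolding StabN_def by blast
  then show ?thesis
    using StabN_bij[OF assms(1)] by (simp add: bij_is_inj)
qed

definition same_germ :: "(cantor \<Rightarrow> cantor) \<Rightarrow> (cantor \<Rightarrow> cantor) \<Rightarrow> cantor \<Rightarrow> bool" where
  "same_germ g h x \<longleftrightarrow> (\<exists>L. \<forall>y\<in>cyl (take_seq L x). g y = h y)"

lemma same_germ_if_log_slope_eq:
  assumes "g \<in> thompsonV" "h \<in> thompsonV" "g x = h x" "log_slope g x = log_slope h x"
  shows "same_germ g h x"
proof -
  obtain L0 where L0: "\<And>L. L0 \<le> L \<Longrightarrow> \<exists>p'. prefix_replacement g (take_seq L x) p'"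
    using thompsonV_eventually_replacement[OF assms(1)] by blast
  obtain L1 where L1: "\<And>L. L1 \<le> L \<Longrightarrow> \<exists>q'. prefix_replacement h (take_seq L x) q'"
    using thompsonV_eventually_replacement[OF assms(2)] by blast
  obtain p' q' where p': "prefix_replacement g (take_seq (max L0 L1) x) p'"
    and q': "prefix_replacement h (take_seq (max L0 L1) x) q'"
    using L0 L1 by (meson max.cobounded1 max.cobounded2)
  have "length p' = length q'"
    using assms(4) log_slope_prefix_replacement[OF assms(1) mem_cyl_take_seq p']
      log_slope_prefix_replacement[OF assms(2) mem_cyl_take_seq q'] by simp
  then have "p' = q'"
    using prefix_replacement_take_seq_image[OF p'] prefix_replacement_take_seq_image[OF q'] assms(3)
    by simp
  then have "\<forall>y\<in>cyl (take_seq (max L0 L1) x). g y = h y"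
    using p' q' by (auto simp: cyl_def prefix_replacement_def)
  then show ?thesis
    unfolding same_germ_def ..
qed

lemma log_slope_eq_if_same_germ:
  assumes "g \<in> thompsonV" "h \<in> thompsonV" "same_germ g h x"
  shows "log_slope g x = log_slope h x"
proof -
  obtain L where L: "\<forall>y\<in>cyl (take_seq L x). g y = h y"
    using assms(3) by (auto simp: same_germ_def)
  obtain L0 where L0: "\<And>M. L0 \<le> M \<Longrightarrow> \<exists>p'. prefix_replacement g (take_seq M x) p'"
    using thompsonV_eventually_replacement[OF assms(1)] by blast
  obtain L1 where L1: "\<And>M. L1 \<le> M \<Longrightarrow> \<exists>q'. prefix_replacement h (take_seq M x) q'"
    using thompsonV_eventually_replacement[OF assms(2)] by blast
  define M where "M = max L (max L0 L1)"
  obtain p' q' where p': "prefix_replacement g (take_seq M x) p'"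
    and q': "prefix_replacement h (take_seq M x) q'"
    using L0 L1 unfolding M_def by (meson max.cobounded1 max.cobounded2 le_trans)
  have "conc p' t = conc q' t" for t
  proof -
    have "conc (take_seq M x) t \<in> cyl (take_seq L x)"
      using cyl_take_seq_antimono[of L M x] conc_in_cyl unfolding M_def by fastforce
    then show ?thesis
      using L p' q' by (metis prefix_replacement_def)
  qed
  then have "p' = q'"
    by (rule conc_eq_conc_imp_eq)
  then show ?thesis
    using log_slope_prefix_replacement[OF assms(1) mem_cyl_take_seq p']
      log_slope_prefix_replacement[OF assms(2) mem_cyl_take_seq q'] by simp
qed

lemma same_germ_conjugate:
  assumes "continuous_map cantor_top cantor_top \<phi>" "bij \<phi>" "same_germ g h x"
  shows "same_germ (conjugate \<phi> g) (conjugate \<phi> h) (inv \<phi> x)"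
proof -
  obtain L where L: "\<forall>y\<in>cyl (take_seq L x). g y = h y"
    using assms(3) by (auto simp: same_germ_def)
  have "openin cantor_top {y. \<phi> y \<in> cyl (take_seq L x)}"
    using openin_continuous_map_preimage[OF assms(1) openin_cyl] by simp
  moreover have "\<phi> (inv \<phi> x) \<in> cyl (take_seq L x)"
    using assms(2) by (simp add: bij_is_surj surj_f_inv_f)
  ultimately obtain L' where "cyl (take_seq L' (inv \<phi> x)) \<subseteq> {y. \<phi> y \<in> cyl (take_seq L x)}"
    using openin_cantor_top_imp_cyl by (metis mem_Collect_eq)
  then have "\<forall>y\<in>cyl (take_seq L' (inv \<phi> x)). conjugate \<phi> g y = conjugate \<phi> h y"
    using L by auto
  then show ?thesis
    unfolding same_germ_def ..
qed

lemma log_slope_conjugate_eq: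
  assumes "\<phi> \<in> StabN" "g \<in> thompsonV" "h \<in> thompsonV" "g x = h x" "log_slope g x = log_slope h x"
  shows "log_slope (conjugate \<phi> g) (inv \<phi> x) = log_slope (conjugate \<phi> h) (inv \<phi> x)"
proof -
  have "continuous_map cantor_top cantor_top \<phi>"
    using assms(1) by (simp add: StabN_def homeomorphic_imp_continuous_map)
  then have "same_germ (conjugate \<phi> g) (conjugate \<phi> h) (inv \<phi> x)"
    using same_germ_conjugate StabN_bij[OF assms(1)] same_germ_if_log_slope_eq[OF assms(2-5)]
    by blast
  then show ?thesis
    using log_slope_eq_if_same_germ StabN_conjugate assms(1-3) by blast
qed

lemma log_slope_conjugate_comp:
  assumes "\<phi> \<in> StabN" "g \<in> thompsonV" "h \<in> thompsonV"
  shows "log_slope (conjugate \<phi> (g \<circ> h)) (inv \<phi> x)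
    = log_slope (conjugate \<phi> g) (inv \<phi> (h x)) + log_slope (conjugate \<phi> h) (inv \<phi> x)"
  using log_slope_comp[OF StabN_conjugate[OF assms(1,2)] StabN_conjugate[OF assms(1,3)]]
  using StabN_bij[OF assms(1)] by (simp add: conjugate_comp bij_is_surj surj_f_inv_f)

lemma log_slope_conjugate_linear:
  assumes \<phi>: "\<phi> \<in> StabN"
    and f: "f \<in> thompsonV" "f x = x" "log_slope f x = 1"
    and g: "g \<in> thompsonV" "g x = x" "log_slope g x = of_int i"
  shows "log_slope (conjugate \<phi> g) (inv \<phi> x) = log_slope (conjugate \<phi> f) (inv \<phi> x) * of_int i"
proof -
  define \<Lambda> where "\<Lambda> g = log_slope (conjugate \<phi> g) (inv \<phi> x)" for g
  have comp: "g \<circ> k \<in> thompsonV" "(g \<circ> k) x = x" "\<Lambda> (g \<circ> k) = \<Lambda> g + \<Lambda> k"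
      "log_slope (g \<circ> k) x = log_slope g x + log_slope k x"
    if "g \<in> thompsonV" "g x = x" "k \<in> thompsonV" "k x = x" for g k
    using thompsonV_comp[OF that(3,1)] log_slope_conjugate_comp[OF \<phi> that(1,3)]
      log_slope_comp[OF that(1,3)] that(2,4)
    by (simp_all add: \<Lambda>_def)
  have \<Lambda>_id: "\<Lambda> id = 0"
    using StabN_bij[OF \<phi>] log_slope_id by (simp add: \<Lambda>_def bij_is_inj)
  note inv_f = thompsonV_inv_fixed[OF f(1,2)]
  have \<Lambda>_inv_f: "\<Lambda> (inv f) = - \<Lambda> f"
    using comp(3)[OF inv_f(1,2) f(1,2)] \<Lambda>_id thompsonV_bij[OF f(1)] by (simp add: bij_is_inj)
  show ?thesis
    using g
  proof (induction i arbitrary: g rule: int_induct[where k = 0])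
    case base
    have "\<Lambda> g = \<Lambda> id"
      unfolding \<Lambda>_def using base log_slope_id
      by (intro log_slope_conjugate_eq[OF \<phi> _ thompsonV_id]) simp_all
    then show ?case
      using \<Lambda>_id by (simp only: \<Lambda>_def of_int_0 mult_zero_right)
  next
    case (step1 i g)
    have "log_slope (g \<circ> inv f) x = of_int i"
      using comp(4)[OF step1.prems(1,2) inv_f(1,2)] step1.prems(3) inv_f(3) f(3) by simp
    then have "\<Lambda> (g \<circ> inv f) = \<Lambda> f * of_int i"
      unfolding \<Lambda>_def using step1.IH comp(1,2)[OF step1.prems(1,2) inv_f(1,2)] by blast
    then show ?case
      using comp(3)[OF step1.prems(1,2) inv_f(1,2)] \<Lambda>_inv_f unfolding \<Lambda>_def
      by (simp add: algebra_simps comp_def)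
  next
    case (step2 i g)
    have "log_slope (g \<circ> f) x = of_int i"
      using comp(4)[OF step2.prems(1,2) f(1,2)] step2.prems(3) f(3) by simp
    then have "\<Lambda> (g \<circ> f) = \<Lambda> f * of_int i"
      unfolding \<Lambda>_def using step2.IH comp(1,2)[OF step2.prems(1,2) f(1,2)] by blast
    then show ?case
      using comp(3)[OF step2.prems(1,2) f(1,2)] unfolding \<Lambda>_def
      by (simp add: algebra_simps comp_def)
  qed
qed

lemma contracting_fixed_point:
  assumes "h \<in> thompsonV" "h z = z" "log_slope h z = -1"
  obtains L0 where "\<And>L. L0 \<le> L \<Longrightarrow> h ` cyl (take_seq L z) \<subseteq> cyl (take_seq (Suc L) z)"
proof -
  obtain L0 where L0: "\<And>L. L0 \<le> L \<Longrightarrow> \<exists>p'. prefix_replacement h (take_seq L z) p'"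
    using thompsonV_eventually_replacement[OF assms(1)] by blast
  have "h ` cyl (take_seq L z) \<subseteq> cyl (take_seq (Suc L) z)" if L: "L0 \<le> L" for L
  proof -
    obtain p' where p': "prefix_replacement h (take_seq L z) p'"
      using L0[OF L] by blast
    then have "length p' = Suc L"
      using log_slope_prefix_replacement[OF assms(1) mem_cyl_take_seq p'] assms(3) by simp
    then have "p' = take_seq (Suc L) z"
      using prefix_replacement_take_seq_image[OF p'] assms(2) by simp
    then show ?thesis
      using prefix_replacement_image[OF p'] by blast
  qed
  then show thesis
    using that by blast
qed

lemma expanding_fixed_point:
  assumes "f \<in> thompsonV" "f x = x" "log_slope f x = 1"
  obtains M0 where "\<And>M. M0 \<le> M \<Longrightarrow> cyl (take_seq M x) \<subseteq> f ` cyl (take_seq M x)"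
proof -
  have "log_slope (inv f) x = -1"
    using thompsonV_inv_fixed[OF assms(1,2)] assms(3) by simp
  then obtain M0 where M0: "\<And>M. M0 \<le> M \<Longrightarrow> inv f ` cyl (take_seq M x) \<subseteq> cyl (take_seq (Suc M) x)"
    using contracting_fixed_point[OF thompsonV_inv_fixed(1,2)[OF assms(1,2)]] by blast
  have "cyl (take_seq M x) \<subseteq> f ` cyl (take_seq M x)" if "M0 \<le> M" for M
  proof
    fix y
    assume "y \<in> cyl (take_seq M x)"
    then have "inv f y \<in> cyl (take_seq M x)"
      using M0[OF that] cyl_take_seq_antimono[of M "Suc M" x] by auto
    moreover have "y = f (inv f y)"
      using thompsonV_bij[OF assms(1)] by (simp add: bij_is_surj surj_f_inv_f)
    ultimately show "y \<in> f ` cyl (take_seq M x)"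
      by blast
  qed
  then show thesis
    using that by blast
qed

lemma eq_if_mem_cyl_take_seq:
  assumes "\<And>L. L0 \<le> L \<Longrightarrow> y \<in> cyl (take_seq L z)"
  shows "y = z"
proof
  fix n
  have "y \<in> cyl (take_seq (L0 + Suc n) z)"
    using assms by simp
  then show "y n = z n"
    by (simp add: mem_cyl_iff)
qed

lemma subset_of_image_chain:
  assumes "C \<subseteq> f ` C" "C \<subseteq> A L0" "\<And>L. L0 \<le> L \<Longrightarrow> f ` A L \<subseteq> A (Suc L)"
  shows "C \<subseteq> A (L0 + n)"
proof (induction n)
  case 0
  show ?case
    using assms(2) by simp
next
  case (Suc n)
  have "C \<subseteq> f ` A (L0 + n)"
    using assms(1) Suc.IH by blast
  also have "\<dots> \<subseteq> A (L0 + Suc n)"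
    using assms(3)[of "L0 + n"] by simp
  finally show ?case .
qed

text \<open>A homeomorphism cannot conjugate a repelling fixed point into an attracting one: a cylinder
  C around x with C \<subseteq> f C would be trapped in the shrinking neighbourhoods \<phi> (cyl (take_seq L z))
  of x.\<close>

lemma log_slope_conjugate_ne_minus_one:
  assumes \<phi>: "\<phi> \<in> StabN" and f: "f \<in> thompsonV" "f x = x" "log_slope f x = 1"
  shows "log_slope (conjugate \<phi> f) (inv \<phi> x) \<noteq> -1"
proof
  assume minus_one: "log_slope (conjugate \<phi> f) (inv \<phi> x) = -1"
  have bij: "bij \<phi>"
    by (rule StabN_bij[OF \<phi>])
  define z where "z = inv \<phi> x"
  have x_eq: "x = \<phi> z"
    using bij by (simp add: z_def bij_is_surj surj_f_inv_f)
  have "conjugate \<phi> f z = z"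
    using conjugate_apply_inv[OF bij] f(2) by (simp add: z_def)
  then obtain L0 where L0: "\<And>L. L0 \<le> L \<Longrightarrow> conjugate \<phi> f ` cyl (take_seq L z) \<subseteq> cyl (take_seq (Suc L) z)"
    using contracting_fixed_point[OF StabN_conjugate[OF \<phi> f(1)]] minus_one z_def by blast
  define A where "A L = \<phi> ` cyl (take_seq L z)" for L
  have A_step: "f ` A L \<subseteq> A (Suc L)" if "L0 \<le> L" for L
    using L0[OF that] image_conjugate[OF bij] unfolding A_def by (metis image_mono)
  have "openin cantor_top (A L0)"
    using \<phi> homeomorphic_map_openness[of cantor_top cantor_top \<phi> "cyl (take_seq L0 z)"]
    by (simp add: A_def StabN_def openin_cyl)
  moreover have "x \<in> A L0"
    by (simp add: A_def x_eq)
  ultimately obtain M where M: "cyl (take_seq M x) \<subseteq> A L0"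
    using openin_cantor_top_imp_cyl by blast
  obtain M0 where M0: "\<And>M. M0 \<le> M \<Longrightarrow> cyl (take_seq M x) \<subseteq> f ` cyl (take_seq M x)"
    using expanding_fixed_point[OF f] by blast
  define m where "m = max M M0"
  have "cyl (take_seq m x) \<subseteq> f ` cyl (take_seq m x)"
    using M0 by (simp add: m_def)
  moreover have "cyl (take_seq m x) \<subseteq> A L0"
    by (rule order_trans[OF cyl_take_seq_antimono M]) (simp add: m_def)
  ultimately have C_A: "cyl (take_seq m x) \<subseteq> A (L0 + n)" for n
    using A_step by (rule subset_of_image_chain[where A = A])
  have "y = x" if "y \<in> cyl (take_seq m x)" for y
  proof -
    have "inv \<phi> y \<in> cyl (take_seq L z)" if "L0 \<le> L" for L
      using C_A[of "L - L0"] \<open>y \<in> cyl (take_seq m x)\<close> that bij by (auto simp: A_def bij_is_inj)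
    then have "inv \<phi> y = z"
      by (rule eq_if_mem_cyl_take_seq)
    then show "y = x"
      using bij x_eq by (metis bij_inv_eq_iff)
  qed
  moreover have "x(m := \<not> x m) \<in> cyl (take_seq m x)"
    by (simp add: mem_cyl_iff)
  ultimately show False
    by (metis fun_upd_same)
qed

lemma log_slope_conjugate_fixed:
  assumes \<phi>: "\<phi> \<in> StabN" and x: "x \<in> Q2" and g: "g \<in> thompsonV" "g x = x"
  shows "log_slope (conjugate \<phi> g) (inv \<phi> x) = log_slope g x"
proof -
  obtain f where f: "f \<in> thompsonV" "f x = x" "log_slope f x = 1"
    using thompsonV_fixing_with_log_slope_one[OF x] by blast
  define \<kappa> where "\<kappa> = log_slope (conjugate \<phi> f) (inv \<phi> x)"
  have linear: "log_slope (conjugate \<phi> h) (inv \<phi> x) = \<kappa> * log_slope h x"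
    if h: "h \<in> thompsonV" "h x = x" for h
  proof -
    obtain i where i: "log_slope h x = of_int i"
      using log_slope_Ints[OF h(1)] by (auto elim: Ints_cases)
    then show ?thesis
      using log_slope_conjugate_linear[OF \<phi> f h i] by (simp add: \<kappa>_def)
  qed
  obtain f' where f': "f' \<in> thompsonV" "f' (inv \<phi> x) = inv \<phi> x" "log_slope f' (inv \<phi> x) = 1"
    using thompsonV_fixing_with_log_slope_one[OF StabN_inv_Q2[OF \<phi> x]] by blast
  define h where "h = \<phi> \<circ> f' \<circ> inv \<phi>"
  have "h \<in> thompsonV"
    unfolding h_def by (rule StabN_conjugate_inv[OF \<phi> f'(1)])
  moreover have "h x = x"
    using f'(2) StabN_bij[OF \<phi>] by (simp add: h_def bij_is_surj surj_f_inv_f)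
  moreover have "conjugate \<phi> h = f'"
    using StabN_bij[OF \<phi>] by (simp add: h_def o_assoc bij_is_inj)
  ultimately have "\<kappa> * log_slope h x = 1"
    using linear f'(3) by metis
  moreover obtain l m where "\<kappa> = of_int l" "log_slope h x = of_int m"
    using log_slope_Ints[OF StabN_conjugate[OF \<phi> f(1)]] log_slope_Ints[OF \<open>h \<in> thompsonV\<close>]
    by (metis \<kappa>_def Ints_cases)
  ultimately have "l = 1 \<or> l = -1"
    by (metis of_int_eq_1_iff of_int_mult zmult_eq_1_iff)
  moreover have "l \<noteq> -1"
    using log_slope_conjugate_ne_minus_one[OF \<phi> f] \<open>\<kappa> = of_int l\<close> \<kappa>_def by auto
  ultimately have "\<kappa> = 1"
    using \<open>\<kappa> = of_int l\<close> by simp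
  then show ?thesis
    using linear[OF g] by simp
qed

section \<open>The cocycle\<close>

abbreviation slope_cocycle :: "(cantor \<Rightarrow> cantor) \<Rightarrow> (cantor \<Rightarrow> cantor) \<Rightarrow> cantor \<Rightarrow> real" where
  "slope_cocycle \<phi> v x \<equiv> log_slope (conjugate \<phi> v) (inv \<phi> x) - log_slope v x"

lemma slope_cocycle_comp:
  assumes "\<phi> \<in> StabN" "g \<in> thompsonV" "h \<in> thompsonV"
  shows "slope_cocycle \<phi> (g \<circ> h) x = slope_cocycle \<phi> g (h x) + slope_cocycle \<phi> h x"
  using log_slope_conjugate_comp[OF assms] log_slope_comp[OF assms(2,3)] by simp

lemma slope_cocycle_fixed:
  "\<phi> \<in> StabN \<Longrightarrow> x \<in> Q2 \<Longrightarrow> g \<in> thompsonV \<Longrightarrow> g x = x \<Longrightarrow> slope_cocycle \<phi> g x = 0"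
  by (simp add: log_slope_conjugate_fixed)

lemma slope_cocycle_eq:
  assumes "\<phi> \<in> StabN" "x \<in> Q2" "v \<in> thompsonV" "w \<in> thompsonV" "v x = w x"
  shows "slope_cocycle \<phi> v x = slope_cocycle \<phi> w x"
proof -
  have bij: "bij w"
    by (rule thompsonV_bij[OF assms(4)])
  have g: "inv w \<circ> v \<in> thompsonV" "(inv w \<circ> v) x = x"
    using thompsonV_comp[OF assms(3) thompsonV_inv[OF assms(4)]] assms(5) bij
    by (auto simp: bij_is_inj)
  have "v = w \<circ> (inv w \<circ> v)"
    using bij by (simp add: o_assoc bij_is_surj surj_iff[THEN iffD1])
  then have "slope_cocycle \<phi> v x = slope_cocycle \<phi> w x + slope_cocycle \<phi> (inv w \<circ> v) x"
    using slope_cocycle_comp[OF assms(1,4) g(1)] g(2) by metis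
  then show ?thesis
    using slope_cocycle_fixed[OF assms(1,2) g] by simp
qed

lemma slope_cocycle_comp_conjugate:
  assumes "bij \<phi>" "bij \<psi>"
  shows "slope_cocycle (\<phi> \<circ> \<psi>) u x = slope_cocycle \<psi> (conjugate \<phi> u) (inv \<phi> x) + slope_cocycle \<phi> u x"
  by (simp add: o_inv_distrib[OF assms] o_assoc)

lemma gamma_witness:
  assumes "y \<in> Q2"
  obtains u where "u \<in> thompsonV" "u zero_seq = y" "gamma \<phi> y = slope_cocycle \<phi> u zero_seq"
proof -
  define u where "u = (SOME u. u \<in> thompsonV \<and> u zero_seq = y)"
  have "\<exists>u. u \<in> thompsonV \<and> u zero_seq = y"
    using thompsonV_transitive_Q2[OF assms] by metis
  then have "u \<in> thompsonV \<and> u zero_seq = y"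
    unfolding u_def by (rule someI_ex)
  moreover have "gamma \<phi> y = slope_cocycle \<phi> u zero_seq"
    by (simp add: gamma_def Let_def u_def)
  ultimately show thesis
    using that by blast
qed

lemma gamma_eq:
  assumes "\<phi> \<in> StabN" "u \<in> thompsonV" "u zero_seq = y"
  shows "gamma \<phi> y = slope_cocycle \<phi> u zero_seq"
proof -
  have "y \<in> Q2"
    using thompsonV_Q2[OF assms(2) zero_seq_in_Q2] assms(3) by simp
  then obtain u' where "u' \<in> thompsonV" "u' zero_seq = y" "gamma \<phi> y = slope_cocycle \<phi> u' zero_seq"
    by (rule gamma_witness)
  then show ?thesis
    using slope_cocycle_eq[OF assms(1) zero_seq_in_Q2 _ assms(2)] assms(3) by simp
qed

lemma gamma_Ints:
  assumes "\<phi> \<in> StabN" "y \<in> Q2"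
  shows "gamma \<phi> y \<in> \<int>"
proof -
  obtain u where "u \<in> thompsonV" "u zero_seq = y" "gamma \<phi> y = slope_cocycle \<phi> u zero_seq"
    using gamma_witness[OF assms(2)] .
  then show ?thesis
    using log_slope_Ints StabN_conjugate[OF assms(1)] by (simp add: Ints_diff)
qed

lemma gamma_diff:
  assumes "\<phi> \<in> StabN" "x \<in> Q2" "v \<in> thompsonV"
  shows "gamma \<phi> (v x) - gamma \<phi> x = slope_cocycle \<phi> v x"
proof -
  obtain u where u: "u \<in> thompsonV" "u zero_seq = x"
    using thompsonV_transitive_Q2[OF assms(2)] .
  have "gamma \<phi> (v x) = slope_cocycle \<phi> (v \<circ> u) zero_seq"
    using gamma_eq[OF assms(1) thompsonV_comp[OF u(1) assms(3)]] u(2) by simp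
  also have "\<dots> = slope_cocycle \<phi> v x + gamma \<phi> x"
    using slope_cocycle_comp[OF assms(1,3) u(1)] gamma_eq[OF assms(1) u] u(2) by simp
  finally show ?thesis
    by simp
qed

lemma gamma_comp:
  assumes \<phi>: "\<phi> \<in> StabN" and \<psi>: "\<psi> \<in> StabN" and y: "y \<in> Q2"
  shows "gamma (\<phi> \<circ> \<psi>) y = gamma \<phi> y + gamma \<psi> (inv \<phi> y) - gamma \<psi> (inv \<phi> zero_seq)"
proof -
  obtain u where u: "u \<in> thompsonV" "u zero_seq = y" "gamma (\<phi> \<circ> \<psi>) y = slope_cocycle (\<phi> \<circ> \<psi>) u zero_seq"
    using gamma_witness[OF y] .
  have "conjugate \<phi> u (inv \<phi> zero_seq) = inv \<phi> y"
    using conjugate_apply_inv[OF StabN_bij[OF \<phi>]] u(2) by simp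
  then have "slope_cocycle \<psi> (conjugate \<phi> u) (inv \<phi> zero_seq) = gamma \<psi> (inv \<phi> y) - gamma \<psi> (inv \<phi> zero_seq)"
    using gamma_diff[OF \<psi> StabN_inv_Q2[OF \<phi> zero_seq_in_Q2] StabN_conjugate[OF \<phi> u(1)]] by simp
  then show ?thesis
    using u(3) slope_cocycle_comp_conjugate[OF StabN_bij[OF \<phi>] StabN_bij[OF \<psi>]] gamma_eq[OF \<phi> u(1,2)]
    by simp
qed

theorem mainTheorem14:
  fixes \<phi> \<psi> :: "cantor \<Rightarrow> cantor" and x :: cantor and v w :: "cantor \<Rightarrow> cantor"
  assumes "\<phi> \<in> StabN" and "\<psi> \<in> StabN" and "x \<in> Q2"
    and "v \<in> thompsonV" and "w \<in> thompsonV"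
  shows
    "(v x = w x \<longrightarrow>
        log 2 (slope (inv \<psi> \<circ> v \<circ> \<psi>) (inv \<psi> x)) - log 2 (slope v x) =
        log 2 (slope (inv \<psi> \<circ> w \<circ> \<psi>) (inv \<psi> x)) - log 2 (slope w x))
   \<and> (\<forall>y\<in>Q2.
        (\<forall>u1\<in>thompsonV. \<forall>u2\<in>thompsonV. u1 zero_seq = y \<longrightarrow> u2 zero_seq = y \<longrightarrow>
           log 2 (slope (inv \<psi> \<circ> u1 \<circ> \<psi>) (inv \<psi> zero_seq)) - log 2 (slope u1 zero_seq) =
           log 2 (slope (inv \<psi> \<circ> u2 \<circ> \<psi>) (inv \<psi> zero_seq)) - log 2 (slope u2 zero_seq))
      \<and> (\<forall>u\<in>thompsonV. u zero_seq = y \<longrightarrow>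
           gamma \<psi> y = log 2 (slope (inv \<psi> \<circ> u \<circ> \<psi>) (inv \<psi> zero_seq)) - log 2 (slope u zero_seq))
      \<and> gamma \<psi> y \<in> \<int>)
   \<and> gamma \<psi> (v x) - gamma \<psi> x =
        log 2 (slope (inv \<psi> \<circ> v \<circ> \<psi>) (inv \<psi> x)) - log 2 (slope v x)
   \<and> (\<forall>y\<in>Q2. gamma (\<phi> \<circ> \<psi>) y = gamma \<phi> y + gamma \<psi> (inv \<phi> y) - gamma \<psi> (inv \<phi> zero_seq))"
proof (intro conjI impI ballI)
  show "v x = w x \<Longrightarrow> slope_cocycle \<psi> v x = slope_cocycle \<psi> w x"
    by (rule slope_cocycle_eq[OF assms(2,3,4,5)])
  show "slope_cocycle \<psi> u1 zero_seq = slope_cocycle \<psi> u2 zero_seq"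
    if "u1 \<in> thompsonV" "u2 \<in> thompsonV" "u1 zero_seq = y" "u2 zero_seq = y" for y u1 u2
    using slope_cocycle_eq[OF assms(2) zero_seq_in_Q2 that(1,2)] that(3,4) by simp
  show "gamma \<psi> y = slope_cocycle \<psi> u zero_seq" if "u \<in> thompsonV" "u zero_seq = y" for y u
    by (rule gamma_eq[OF assms(2) that])
  show "gamma \<psi> y \<in> \<int>" if "y \<in> Q2" for y
    by (rule gamma_Ints[OF assms(2) that])
  show "gamma \<psi> (v x) - gamma \<psi> x = slope_cocycle \<psi> v x"
    by (rule gamma_diff[OF assms(2,3,4)])
  show "gamma (\<phi> \<circ> \<psi>) y = gamma \<phi> y + gamma \<psi> (inv \<phi> y) - gamma \<psi> (inv \<phi> zero_seq)"
    if "y \<in> Q2" for y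
    by (rule gamma_comp[OF assms(1,2) that])
qed

end
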